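(* Let $G(\circ)$, $G(\ast)$ be groups on $G$ with the same neutral element $1$, and let $f:G\to G$ be a bijection such that $\mathrm{dist}([\circ],[\ast])=\mathrm{dist}(\circ_f,\ast)$. Then either $f(1)=1$, or else $\circ_f=\ast_\ell$ for some transposition $\ell$ of $G$ and $\mathrm{dist}([\circ],[\ast])=\mathrm{dist}(\ast_\ell,\ast)$.
   Context: $G$ is a finite set. For group operations $\circ,\ast$ on $G$, $\mathrm{dist}(\circ,\ast)=|\{(a,b)\in G\times G: a\circ b\ne a\ast b\}|$. For a bijection $f:G\to G$, $\circ_f$ is the operation $a\circ_f b=f(f^{-1}(a)\circ f^{-1}(b))$ (so $f:G(\circ)\to G(\circ_f)$ is an isomorphism). $[\circ]$ is the set of all group operations on $G$ giving groups isomorphic to $G(\circ)$, and $\mathrm{dist}([\circ],[\ast])=\min\{\mathrm{dist}(\bullet,\star): \bullet\in[\circ],\ \star\in[\ast],\ G(\bullet)\ne G(\star)\}$. *)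

theory Defs
  imports "HOL-Algebra.Group" "HOL-Combinatorics.Transposition"
begin

text \<open>A binary operation on the whole (finite) type, viewed as a HOL-Algebra structure
  whose unit is the (unique, if it exists) two-sided identity of the operation.\<close>
definition gstr :: "('a \<Rightarrow> 'a \<Rightarrow> 'a) \<Rightarrow> 'a monoid" where
  "gstr op = \<lparr>carrier = UNIV, mult = op, one = (SOME e. \<forall>x. op e x = x \<and> op x e = x)\<rparr>"

definition is_group_op :: "('a \<Rightarrow> 'a \<Rightarrow> 'a) \<Rightarrow> bool" where
  "is_group_op op \<longleftrightarrow> group (gstr op)"

definition opdist :: "('a::finite \<Rightarrow> 'a \<Rightarrow> 'a) \<Rightarrow> ('a \<Rightarrow> 'a \<Rightarrow> 'a) \<Rightarrow> nat" where
  "opdist op1 op2 = card {(a, b). op1 a b \<noteq> op2 a b}"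

definition transport :: "('a \<Rightarrow> 'a) \<Rightarrow> ('a \<Rightarrow> 'a \<Rightarrow> 'a) \<Rightarrow> ('a \<Rightarrow> 'a \<Rightarrow> 'a)" where
  "transport f op = (\<lambda>a b. f (op (Hilbert_Choice.inv f a) (Hilbert_Choice.inv f b)))"

definition iso_class :: "('a \<Rightarrow> 'a \<Rightarrow> 'a) \<Rightarrow> ('a \<Rightarrow> 'a \<Rightarrow> 'a) set" where
  "iso_class op = {s. is_group_op s \<and> gstr op \<cong> gstr s}"

definition class_dist :: "('a::finite \<Rightarrow> 'a \<Rightarrow> 'a) \<Rightarrow> ('a \<Rightarrow> 'a \<Rightarrow> 'a) \<Rightarrow> nat" where
  "class_dist op1 op2 =
     Min {opdist p q | p q. p \<in> iso_class op1 \<and> q \<in> iso_class op2 \<and> p \<noteq> q}"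

end

theory Submission
  imports Defs
begin

text \<open>Write \<open>u = f 1\<close> and \<open>\<ell> = (1 u)\<close>. If \<open>u \<noteq> 1\<close>, both \<open>\<circ>\<^sub>f\<close> and \<open>\<ast>\<^sub>\<ell>\<close> have neutral
  element \<open>u\<close>, so \<open>\<circ>\<^sub>f\<close> disagrees with \<open>\<ast>\<close> on every pair with an entry in \<open>{1, u}\<close>,
  whereas \<open>\<circ>\<^sub>f\<close> agrees with \<open>\<ast>\<^sub>\<ell>\<close> on all pairs with an entry \<open>u\<close>, and off these lines
  \<open>\<ast>\<^sub>\<ell>\<close> differs from \<open>\<ast>\<close> only where the product lies in \<open>{1, u}\<close>.  Counting shows
  \<open>dist(\<circ>\<^sub>f, \<ast>\<^sub>\<ell>) < dist(\<circ>\<^sub>f, \<ast>)\<close>.  Transporting by \<open>\<ell>\<close>, the pair \<open>(\<circ>\<^sub>\<ell>\<^sub>f, \<ast>)\<close> realises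
  \<open>dist(\<circ>\<^sub>f, \<ast>\<^sub>\<ell>)\<close>, so minimality forces \<open>\<circ>\<^sub>f = \<ast>\<^sub>\<ell>\<close>.\<close>

abbreviation univ_monoid :: "('a \<Rightarrow> 'a \<Rightarrow> 'a) \<Rightarrow> 'a \<Rightarrow> 'a monoid" where
  "univ_monoid op e \<equiv> \<lparr>carrier = UNIV, mult = op, one = e\<rparr>"

lemma
  assumes "group (univ_monoid op e)"
  shows group_op_one_left: "op e b = b"
    and group_op_one_right: "op b e = b"
    and group_op_one_unique_left: "op a b = b \<Longrightarrow> a = e"
    and group_op_one_unique_right: "op a b = a \<Longrightarrow> b = e"
    and group_op_cancel_left: "op x y = op x z \<Longrightarrow> y = z"
proof -
  interpret group "univ_monoid op e" by (rule assms)
  show "op e b = b" using l_one[of b] by simp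
  show "op b e = b" using r_one[of b] by simp
  show "op a b = b \<Longrightarrow> a = e" using r_cancel_one[of b a] by simp
  show "op a b = a \<Longrightarrow> b = e" using l_cancel_one[of a b] by simp
  show "op x y = op x z \<Longrightarrow> y = z" using Units_l_cancel[of x y z] Units_eq by simp
qed

lemma gstr_group:
  assumes "group (univ_monoid op e)"
  shows "gstr op = univ_monoid op e"
proof -
  have "(SOME e'. \<forall>x. op e' x = x \<and> op x e' = x) = e"
  proof (rule some_equality)
    show "\<forall>x. op e x = x \<and> op x e = x"
      using assms by (simp add: group_op_one_left group_op_one_right)
    show "e' = e" if "\<forall>x. op e' x = x \<and> op x e' = x" for e'
      using that group_op_one_right[OF assms, of e'] by metis
  qed
  then show ?thesis unfolding gstr_def by simp
qed

lemma transport_apply: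
  assumes "bij g"
  shows "transport g op (g x) (g y) = g (op x y)"
  using assms unfolding transport_def by (simp add: bij_is_inj)

lemma transport_id: "transport id op = op"
  unfolding transport_def by simp

lemma transport_comp:
  assumes "bij g" "bij h"
  shows "transport g (transport h op) = transport (g \<circ> h) op"
  using assms unfolding transport_def by (simp add: o_inv_distrib)

lemma transport_transpose_involutory:
  "transport (transpose a b) (transport (transpose a b) op) = op"
  by (simp add: transport_comp transport_id)

lemma transport_transpose:
  "transport (transpose a b) op x y = transpose a b (op (transpose a b x) (transpose a b y))"
  unfolding transport_def by simp

lemma opdist_transport:
  fixes p q :: "'a::finite \<Rightarrow> 'a \<Rightarrow> 'a"
  assumes "bij g"
  shows "opdist (transport g p) (transport g q) = opdist p q"
proof -
  have "{(a, b). transport g p a b \<noteq> transport g q a b} = map_prod g g ` {(a, b). p a b \<noteq> q a b}"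
  proof (rule Set.set_eqI)
    fix z :: "'a \<times> 'a"
    obtain x y where z: "z = (g x, g y)"
      using \<open>bij g\<close> by (metis bij_pointE prod.exhaust)
    show "z \<in> {(a, b). transport g p a b \<noteq> transport g q a b} \<longleftrightarrow>
        z \<in> map_prod g g ` {(a, b). p a b \<noteq> q a b}"
      using assms by (auto simp: z transport_apply bij_is_inj inj_eq)
  qed
  moreover have "inj (map_prod g g)"
    using assms by (simp add: bij_is_inj prod.inj_map)
  ultimately show ?thesis
    unfolding opdist_def by (simp add: card_image inj_on_subset)
qed

lemma group_transport:
  assumes G: "group (univ_monoid op e)" and g: "bij g"
  shows "group (univ_monoid (transport g op) (g e))"
proof -
  interpret group "univ_monoid op e" by (rule G)
  have onto: "\<And>x. \<exists>x'. x = g x'"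
    using g by (metis bij_pointE)
  show ?thesis
  proof (rule groupI; simp)
    fix x y z
    show "transport g op (transport g op x y) z = transport g op x (transport g op y z)"
      using onto[of x] onto[of y] onto[of z] m_assoc
      by (auto simp: transport_apply[OF g])
  next
    fix x
    show "transport g op (g e) x = x"
      using onto[of x] l_one by (auto simp: transport_apply[OF g])
  next
    fix x
    obtain x' where x: "x = g x'" using onto by blast
    obtain y where "op y x' = e" using l_inv_ex[of x'] by auto
    then have "transport g op (g y) x = g e" by (simp add: x transport_apply[OF g])
    then show "\<exists>y. transport g op y x = g e" by blast
  qed
qed

lemma iso_transport:
  assumes G: "group (univ_monoid op e)" and g: "bij g"
  shows "gstr op \<cong> gstr (transport g op)"
proof (rule is_isoI)
  show "g \<in> iso (gstr op) (gstr (transport g op))"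
    unfolding gstr_group[OF G] gstr_group[OF group_transport[OF G g]]
    using g by (intro isoI) (simp_all add: hom_def transport_apply)
qed

lemma transport_in_iso_class:
  assumes G: "group (univ_monoid op e)" and g: "bij g"
  shows "transport g op \<in> iso_class op"
  using group_transport[OF G g] gstr_group[OF group_transport[OF G g]] iso_transport[OF G g]
  by (simp add: iso_class_def is_group_op_def)

lemma in_iso_class_self:
  assumes "group (univ_monoid op e)"
  shows "op \<in> iso_class op"
  using transport_in_iso_class[OF assms bij_id] by (simp add: transport_id)

lemma class_dist_le:
  fixes op1 op2 :: "'a::finite \<Rightarrow> 'a \<Rightarrow> 'a"
  assumes "p \<in> iso_class op1" "q \<in> iso_class op2" "p \<noteq> q"
  shows "class_dist op1 op2 \<le> opdist p q"
proof -
  let ?M = "{opdist p q | p q. p \<in> iso_class op1 \<and> q \<in> iso_class op2 \<and> p \<noteq> q}"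
  have "?M \<subseteq> {..card (UNIV :: ('a \<times> 'a) set)}"
    unfolding opdist_def by (auto intro!: card_mono)
  then have "finite ?M" by (rule finite_subset) simp
  moreover have "opdist p q \<in> ?M" using assms by blast
  ultimately show ?thesis unfolding class_dist_def by (rule Min_le)
qed

lemma group_ops_differ_near_identities:
  assumes P: "group (univ_monoid P u)" and S: "group (univ_monoid op e)"
    and "u \<noteq> e" and "a \<in> {e, u} \<or> b \<in> {e, u}"
  shows "P a b \<noteq> op a b"
  using assms(3,4)
    group_op_one_left[OF P] group_op_one_right[OF P] group_op_one_left[OF S] group_op_one_right[OF S]
    group_op_one_unique_left[OF P] group_op_one_unique_right[OF P]
    group_op_one_unique_left[OF S] group_op_one_unique_right[OF S]
  by (metis insert_iff singletonD)

text \<open>Off the lines through \<open>e\<close> and \<open>u\<close>, the transposed operation differs from \<open>op\<close> only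
  where the product is \<open>e\<close> or \<open>u\<close>; by cancellation such a pair is determined by its
  first entry and which of \<open>e, u\<close> the product is.\<close>

lemma card_transpose_disagreement_off_identities:
  fixes op :: "'a::finite \<Rightarrow> 'a \<Rightarrow> 'a"
  assumes S: "group (univ_monoid op e)" and "u \<noteq> e"
  shows "card {(a, b). a \<notin> {e, u} \<and> b \<notin> {e, u} \<and> op a b \<noteq> transport (transpose e u) op a b}
    < card {(a, b). a = u \<or> b = u}"
    (is "card ?D < card ?R")
proof -
  define h where "h = (\<lambda>(a, b). if op a b = e then (u, a) else (a, u))"
  have D: "a \<notin> {e, u} \<and> op a b \<in> {e, u}" if "(a, b) \<in> ?D" for a b
    using that by (auto simp: transport_transpose transpose_def split: if_splits)
  have "inj_on h ?D"
  proof (rule inj_onI)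
    fix p q assume "p \<in> ?D" "q \<in> ?D" "h p = h q"
    moreover obtain a b a' b' where "p = (a, b)" "q = (a', b')" by fastforce
    ultimately have "a = a'" "op a b = op a' b'"
      using D \<open>u \<noteq> e\<close> by (auto simp: h_def split: if_splits)
    then show "p = q"
      using group_op_cancel_left[OF S] \<open>p = (a, b)\<close> \<open>q = (a', b')\<close> by simp
  qed
  moreover have "h ` ?D \<subseteq> ?R - {(u, u)}"
  proof
    fix z assume "z \<in> h ` ?D"
    then obtain a b where "(a, b) \<in> ?D" "z = h (a, b)" by auto
    with D[OF this(1)] show "z \<in> ?R - {(u, u)}" by (auto simp: h_def)
  qed
  ultimately have "card ?D \<le> card (?R - {(u, u)})"
    by (intro card_inj_on_le) simp_all
  also have "\<dots> < card ?R"
    by (intro card_Diff1_less) auto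
  finally show ?thesis .
qed

lemma opdist_transport_transpose_less:
  fixes P op :: "'a::finite \<Rightarrow> 'a \<Rightarrow> 'a"
  assumes P: "group (univ_monoid P u)" and S: "group (univ_monoid op e)" and "u \<noteq> e"
  shows "opdist P (transport (transpose e u) op) < opdist P op"
proof -
  define T where "T = transport (transpose e u) op"
  define A where "A = {(a, b). P a b \<noteq> op a b}"
  define B where "B = {(a, b). P a b \<noteq> T a b}"
  define D where "D = {(a, b). a \<notin> {e, u} \<and> b \<notin> {e, u} \<and> op a b \<noteq> T a b}"
  define C where "C = {(a, b). a \<in> {e, u} \<or> b \<in> {e, u}}"
  define R where "R = {(a::'a, b::'a). a = u \<or> b = u}"
  have T: "group (univ_monoid T u)"
    using group_transport[OF S, of "transpose e u"] by (simp add: T_def)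
  have "C \<subseteq> A"
    using group_ops_differ_near_identities[OF P S \<open>u \<noteq> e\<close>] by (auto simp: A_def C_def)
  have "R \<subseteq> C" by (auto simp: R_def C_def)
  \<comment> \<open>\<open>P\<close> and \<open>T\<close> share the neutral element \<open>u\<close>, so they agree on \<open>R\<close>.\<close>
  have "B \<subseteq> (A - C) \<union> (C - R) \<union> D"
    using group_op_one_left[OF P] group_op_one_right[OF P]
      group_op_one_left[OF T] group_op_one_right[OF T]
    by (auto simp: A_def B_def C_def D_def R_def)
  then have "card B \<le> card (A - C) + card (C - R) + card D"
    by (metis (no_types, lifting) card_Un_le card_mono finite add_le_mono1 order_trans)
  also have "\<dots> < card (A - C) + card (C - R) + card R"
    using card_transpose_disagreement_off_identities[OF S \<open>u \<noteq> e\<close>]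
    by (simp add: D_def R_def T_def)
  also have "\<dots> = card A"
    using \<open>C \<subseteq> A\<close> \<open>R \<subseteq> C\<close> card_Diff_subset[of C A] card_Diff_subset[of R C]
      card_mono[of A C] card_mono[of C R]
    by simp
  finally show ?thesis
    by (simp add: opdist_def A_def B_def T_def)
qed

theorem lemma3p3:
  fixes op1 op2 :: "'a::finite \<Rightarrow> 'a \<Rightarrow> 'a" and e :: 'a and f :: "'a \<Rightarrow> 'a"
  assumes "group \<lparr>carrier = UNIV, mult = op1, one = e\<rparr>"
    and "group \<lparr>carrier = UNIV, mult = op2, one = e\<rparr>"
    and "bij f"
    and "class_dist op1 op2 = opdist (transport f op1) op2"
  shows "f e = e \<or>
    (\<exists>a b. a \<noteq> b \<and> transport f op1 = transport (transpose a b) op2 \<and>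
       class_dist op1 op2 = opdist (transport (transpose a b) op2) op2)"
proof (cases "f e = e")
  case False
  define l where "l = transpose e (f e)"
  define P where "P = transport f op1"
  have P: "group (univ_monoid P (f e))"
    unfolding P_def by (rule group_transport[OF assms(1,3)])
  have "P = transport l op2"
  proof (rule ccontr)
    assume "P \<noteq> transport l op2"
    then have "transport l P \<noteq> op2"
      using transport_transpose_involutory by (metis l_def)
    moreover have "transport l P \<in> iso_class op1"
      using transport_in_iso_class[OF assms(1), of "l \<circ> f"] \<open>bij f\<close>
      by (simp add: P_def l_def transport_comp bij_comp)
    ultimately have "class_dist op1 op2 \<le> opdist (transport l P) (transport l (transport l op2))"
      using class_dist_le in_iso_class_self[OF assms(2)]
      by (simp add: l_def transport_transpose_involutory)
    also have "\<dots> = opdist P (transport l op2)"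
      by (simp add: l_def opdist_transport)
    also have "\<dots> < opdist P op2"
      unfolding l_def by (rule opdist_transport_transpose_less[OF P assms(2)]) (use False in simp)
    finally show False
      using assms(4) by (simp add: P_def)
  qed
  then have "e \<noteq> f e \<and> transport f op1 = transport (transpose e (f e)) op2 \<and>
      class_dist op1 op2 = opdist (transport (transpose e (f e)) op2) op2"
    using False assms(4) by (simp add: P_def l_def)
  then show ?thesis by blast
qed simp

end
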